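(* Let $U,V\in\mathbb{R}^{n\times r}$ each have orthonormal columns, and let $\Gamma\in\mathbb{R}^r$ be the vector of principal angles between $\operatorname{range}U$ and $\operatorname{range}V$, i.e. $\cos(\Gamma)$ is the vector of singular values of $U^TV$. Then for every $Z\in\mathcal{S}^r_+$, $$\operatorname{dist}(VZV^T;\,U\mathcal{S}^r_+U^T)\le\sqrt2\,\|Z\|_F\,\|\sin(\Gamma)\|_2,$$ where $\sin(\Gamma)$ is taken entrywise.
   Context: $\mathcal{S}^r_+$ is the cone of real symmetric PSD $r\times r$ matrices; $U\mathcal{S}^r_+U^T=\{UWU^T:W\in\mathcal{S}^r_+\}$; $\operatorname{dist}(X;\mathcal{Q})=\inf_{Y\in\mathcal{Q}}\|X-Y\|_F$ with $\|\cdot\|_F$ the Frobenius norm. *)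

theory Defs
  imports "HOL-Analysis.Analysis"
begin

definition psd :: "real^'r^'r \<Rightarrow> bool" where
  "psd Z \<longleftrightarrow> transpose Z = Z \<and> (\<forall>x. 0 \<le> x \<bullet> (Z *v x))"

definition diag_mat :: "real^'r \<Rightarrow> real^'r^'r" where
  "diag_mat s = (\<chi> i j. if i = j then s $ i else 0)"

definition singular_values :: "real^'r^'r \<Rightarrow> real^'r \<Rightarrow> bool" where
  "singular_values M s \<longleftrightarrow> (\<forall>i. 0 \<le> s $ i) \<and>
     (\<exists>P Q. orthogonal_matrix P \<and> orthogonal_matrix Q \<and> M = P ** diag_mat s ** transpose Q)"

definition principal_angles :: "real^'r^'n \<Rightarrow> real^'r^'n \<Rightarrow> real^'r \<Rightarrow> bool" where
  "principal_angles U V g \<longleftrightarrow> (\<forall>i. 0 \<le> g $ i \<and> g $ i \<le> pi / 2) \<and>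
     singular_values (transpose U ** V) (\<chi> i. cos (g $ i))"

end

theory Submission
  imports Defs
begin

(*
  Write P = U U^T for the orthogonal projector onto range U, Q = I - P, and
  X = V Z V^T.  The compression P X P = U (U^T X U) U^T lies in the face,
  because U^T X U is again PSD, so the distance is at most |X - P X P|.
  Splitting X - P X P = Q X + P X Q into two Frobenius-orthogonal pieces gives
  |X - P X P| <= sqrt 2 |Q X|, and |Q X| = |Q V Z| <= |Q V| |Z|.  Finally,
  by Pythagoras for the projector P, |Q V|^2 = |V|^2 - |U^T V|^2
  = r - sum cos^2 = sum sin^2, the cosines being the singular values of U^T V.
*)

text \<open>On real^'m^'n the inner product is the Frobenius inner product
  and norm the Frobenius norm; these are its entrywise forms.\<close>

lemma inner_matrix: "inner (A::real^'m^'n) B = (\<Sum>i\<in>UNIV. \<Sum>j\<in>UNIV. A$i$j * B$i$j)"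
  by (simp add: inner_vec_def)

lemma matrix_mult_entry: "((A::real^'k^'n) ** B)$i$j = (\<Sum>k\<in>UNIV. A$i$k * B$k$j)"
  by (simp add: matrix_matrix_mult_def)

lemma transpose_entry: "transpose (A::real^'k^'n) $i$j = A$j$i"
  by (simp add: transpose_def)

lemma inner_matrix_mult_left: "inner ((A::real^'k^'n) ** B) C = inner B (transpose A ** C)"
proof -
  have "inner (A ** B) C = (\<Sum>i\<in>UNIV. \<Sum>j\<in>UNIV. \<Sum>k\<in>UNIV. A$i$k * B$k$j * C$i$j)"
    unfolding inner_matrix matrix_mult_entry sum_distrib_right ..
  also have "\<dots> = (\<Sum>k\<in>UNIV. \<Sum>i\<in>UNIV. \<Sum>j\<in>UNIV. A$i$k * B$k$j * C$i$j)"
    by (rule trans[OF sum.cong[OF refl sum.swap] sum.swap])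
  also have "\<dots> = (\<Sum>k\<in>UNIV. \<Sum>j\<in>UNIV. \<Sum>i\<in>UNIV. A$i$k * B$k$j * C$i$j)"
    by (intro sum.cong refl sum.swap)
  also have "\<dots> = (\<Sum>k\<in>UNIV. \<Sum>j\<in>UNIV. B$k$j * (\<Sum>i\<in>UNIV. A$i$k * C$i$j))"
    unfolding sum_distrib_left by (intro sum.cong refl) (simp only: mult_ac)
  also have "\<dots> = inner B (transpose A ** C)"
    unfolding inner_matrix matrix_mult_entry transpose_entry ..
  finally show ?thesis .
qed

lemma inner_transpose: "inner (transpose (A::real^'m^'n)) (transpose B) = inner A B"
  unfolding inner_matrix transpose_entry by (rule sum.swap)

lemma norm_transpose: "norm (transpose (A::real^'m^'n)) = norm A"
  by (simp only: norm_eq_sqrt_inner inner_transpose)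

lemma norm_isometry_left:
  fixes V :: "real^'r^'n" and A :: "real^'k^'r"
  assumes "transpose V ** V = mat 1"
  shows "norm (V ** A) = norm A"
proof -
  have "inner (V ** A) (V ** A) = inner A A"
    by (simp add: inner_matrix_mult_left matrix_mul_assoc assms)
  thus ?thesis by (simp add: norm_eq_sqrt_inner)
qed

lemma norm_isometry_right:
  fixes V :: "real^'r^'n" and A :: "real^'r^'k"
  assumes "transpose V ** V = mat 1"
  shows "norm (A ** transpose V) = norm A"
proof -
  have "norm (A ** transpose V) = norm (V ** transpose A)"
    by (metis matrix_transpose_mul norm_transpose transpose_transpose)
  also have "\<dots> = norm A"
    by (simp add: norm_isometry_left[OF assms] norm_transpose)
  finally show ?thesis .
qed

text \<open>Submultiplicativity of the Frobenius norm (Cauchy--Schwarz on rows and columns).\<close>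
lemma norm_matrix_mult_le: "norm ((A::real^'k^'n) ** B) \<le> norm A * norm B"
proof -
  have entry: "(A ** B)$i$j = inner (A$i) (column j B)" for i j
    by (simp add: matrix_matrix_mult_def inner_vec_def column_def)
  have "norm (A ** B)^2 = (\<Sum>i\<in>UNIV. \<Sum>j\<in>UNIV. (inner (A$i) (column j B))^2)"
    unfolding power2_norm_eq_inner inner_matrix entry by (simp add: power2_eq_square)
  also have "\<dots> \<le> (\<Sum>i\<in>UNIV. \<Sum>j\<in>UNIV. norm (A$i)^2 * norm (column j B)^2)"
  proof (intro sum_mono)
    fix i j
    have "\<bar>inner (A$i) (column j B)\<bar> \<le> norm (A$i) * norm (column j B)"
      by (rule Cauchy_Schwarz_ineq2)
    hence "\<bar>inner (A$i) (column j B)\<bar>^2 \<le> (norm (A$i) * norm (column j B))^2"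
      by (intro power_mono) auto
    thus "(inner (A$i) (column j B))^2 \<le> norm (A$i)^2 * norm (column j B)^2"
      by (simp add: power_mult_distrib)
  qed
  also have "\<dots> = (\<Sum>i\<in>UNIV. norm (A$i)^2) * (\<Sum>j\<in>UNIV. norm (column j B)^2)"
    by (rule sum_product[symmetric])
  also have "(\<Sum>i\<in>UNIV. norm (A$i)^2) = norm A^2"
    by (simp add: power2_norm_eq_inner inner_vec_def)
  also have "(\<Sum>j\<in>UNIV. norm (column j B)^2) = norm (transpose B)^2"
    by (simp add: power2_norm_eq_inner inner_vec_def column_def transpose_def)
  finally have "norm (A ** B)^2 \<le> (norm A * norm B)^2"
    by (simp add: norm_transpose power_mult_distrib)
  thus ?thesis by (rule power2_le_imp_le) simp
qed

lemma norm_vec_squared: "norm (x::real^'n)^2 = (\<Sum>i\<in>UNIV. (x$i)^2)"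
  unfolding power2_norm_eq_inner inner_vec_def by (simp add: power2_eq_square)

lemma norm_diag_mat: "norm (diag_mat s) = norm s"
proof (rule power2_eq_imp_eq)
  show "norm (diag_mat s)^2 = norm s^2"
    unfolding power2_norm_eq_inner inner_matrix diag_mat_def inner_vec_def
    by (simp add: if_distrib cong: if_cong)
qed simp_all

lemma norm_mat_one: "norm (mat 1 :: real^'r^'r)^2 = real CARD('r)"
  unfolding power2_norm_eq_inner inner_matrix mat_def by (simp add: if_distrib cong: if_cong)

text \<open>Two-sided orthogonal invariance: the Frobenius norm of a matrix with singular
  values s is the Euclidean norm of s.\<close>
lemma norm_singular_values:
  assumes "singular_values M s"
  shows "norm M = norm s"
proof -
  obtain P Q where P: "transpose P ** P = mat 1" and Q: "transpose Q ** Q = mat 1"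
    and M: "M = P ** diag_mat s ** transpose Q"
    using assms unfolding singular_values_def orthogonal_matrix_def by blast
  have "norm M = norm (P ** (diag_mat s ** transpose Q))"
    by (simp add: M matrix_mul_assoc)
  also have "\<dots> = norm (diag_mat s)"
    by (simp add: norm_isometry_left[OF P] norm_isometry_right[OF Q])
  finally show ?thesis by (simp add: norm_diag_mat)
qed

lemma matrix_diff_ldistrib: "(A::real^'k^'n) ** (B - C) = A ** B - A ** C"
  by (simp add: matrix_matrix_mult_def vec_eq_iff algebra_simps sum_subtractf)

lemma matrix_diff_rdistrib: "((B::real^'k^'n) - C) ** A = B ** A - C ** A"
  by (simp add: matrix_matrix_mult_def vec_eq_iff algebra_simps sum_subtractf)

lemma transpose_diff: "transpose ((A::real^'k^'n) - B) = transpose A - transpose B"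
  by (simp add: transpose_def vec_eq_iff)

definition orthogonal_projector :: "real^'n^'n \<Rightarrow> bool" where
  "orthogonal_projector P \<longleftrightarrow> transpose P = P \<and> P ** P = P"

lemma orthogonal_projector_range:
  fixes U :: "real^'r^'n"
  assumes "transpose U ** U = mat 1"
  shows "orthogonal_projector (U ** transpose U)"
proof -
  have "U ** transpose U ** (U ** transpose U) = U ** (transpose U ** U) ** transpose U"
    by (simp only: matrix_mul_assoc)
  thus ?thesis by (simp add: orthogonal_projector_def matrix_transpose_mul assms)
qed

lemma orthogonal_projector_complement:
  assumes "orthogonal_projector P"
  shows "orthogonal_projector (mat 1 - P)" and "(mat 1 - P) ** P = 0"
  using assms
  by (simp_all add: orthogonal_projector_def transpose_diff matrix_diff_ldistrib matrix_diff_rdistrib)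

lemma projector_pythagoras:
  assumes "orthogonal_projector P"
  shows "norm (M::real^'k^'n)^2 = norm (P ** M)^2 + norm ((mat 1 - P) ** M)^2"
proof -
  have "transpose P ** (mat 1 - P) = 0"
    using assms by (simp add: orthogonal_projector_def matrix_diff_ldistrib)
  hence orth: "orthogonal (P ** M) ((mat 1 - P) ** M)"
    by (simp add: orthogonal_def inner_matrix_mult_left matrix_mul_assoc)
  have "norm M^2 = norm (P ** M + (mat 1 - P) ** M)^2"
    by (simp add: matrix_diff_rdistrib)
  also have "\<dots> = norm (P ** M)^2 + norm ((mat 1 - P) ** M)^2"
    by (rule norm_add_Pythagorean[OF orth])
  finally show ?thesis .
qed

lemma projector_norm_le:
  assumes "orthogonal_projector P"
  shows "norm (P ** (M::real^'k^'n)) \<le> norm M"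
proof (rule power2_le_imp_le)
  show "norm (P ** M)^2 \<le> norm M^2"
    using projector_pythagoras[OF assms, of M] by simp
qed simp

lemma psd_congruence:
  fixes M :: "real^'r^'n" and Z :: "real^'n^'n"
  assumes "psd Z"
  shows "psd (transpose M ** Z ** M)"
proof -
  have "x \<bullet> ((transpose M ** Z ** M) *v x) = (M *v x) \<bullet> (Z *v (M *v x))" for x
  proof -
    have "x \<bullet> ((transpose M ** Z ** M) *v x) = x \<bullet> (transpose M *v (Z *v (M *v x)))"
      by (simp only: matrix_vector_mul_assoc matrix_mul_assoc)
    also have "\<dots> = (M *v x) \<bullet> (Z *v (M *v x))"
      by (metis dot_lmul_matrix inner_commute transpose_matrix_vector)
    finally show ?thesis .
  qed
  thus ?thesis
    using assms by (simp add: psd_def matrix_transpose_mul matrix_mul_assoc)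
qed

text \<open>Pinching a symmetric matrix by a projector costs at most sqrt 2 times its
  off-range part: X - P ** X ** P = Q ** X + P ** X ** Q orthogonally.\<close>
lemma pinching_bound:
  fixes P X :: "real^'n^'n"
  assumes P: "orthogonal_projector P" and X: "transpose X = X"
  shows "norm (X - P ** X ** P) \<le> sqrt 2 * norm ((mat 1 - P) ** X)"
proof -
  define Q where "Q = mat 1 - P"
  have Q: "orthogonal_projector Q" "Q ** P = 0"
    using orthogonal_projector_complement[OF P] by (simp_all add: Q_def)
  have split: "X - P ** X ** P = Q ** X + P ** X ** Q"
    by (simp add: Q_def matrix_diff_ldistrib matrix_diff_rdistrib)
  have "orthogonal (Q ** X) (P ** X ** Q)"
    using Q by (simp add: orthogonal_def inner_matrix_mult_left matrix_mul_assoc orthogonal_projector_def)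
  hence pyth: "norm (X - P ** X ** P)^2 = norm (Q ** X)^2 + norm (P ** X ** Q)^2"
    unfolding split by (rule norm_add_Pythagorean)
  have "norm (P ** X ** Q) \<le> norm (X ** Q)"
    using projector_norm_le[OF P, of "X ** Q"] by (simp add: matrix_mul_assoc)
  also have "\<dots> = norm (Q ** X)"
    using Q X by (metis norm_transpose matrix_transpose_mul orthogonal_projector_def)
  finally have "norm (X - P ** X ** P)^2 \<le> (sqrt 2 * norm (Q ** X))^2"
    using pyth by (simp add: power_mult_distrib power_mono)
  thus ?thesis unfolding Q_def by (rule power2_le_imp_le) simp
qed

lemma principal_angles_residual:
  fixes U V :: "real^'r^'n"
  assumes U: "transpose U ** U = mat 1" and V: "transpose V ** V = mat 1"
    and angles: "principal_angles U V g"
  shows "norm ((mat 1 - U ** transpose U) ** V) = norm (\<chi> i. sin (g $ i))"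
proof -
  have "norm ((mat 1 - U ** transpose U) ** V)^2 = norm V^2 - norm (U ** (transpose U ** V))^2"
    using projector_pythagoras[OF orthogonal_projector_range[OF U], of V]
    by (simp add: matrix_mul_assoc)
  also have "norm V^2 = real CARD('r)"
    using norm_isometry_left[OF V, of "mat 1"] norm_mat_one by simp
  also have "norm (U ** (transpose U ** V)) = norm (\<chi> i. cos (g $ i))"
    using angles unfolding principal_angles_def
    by (simp add: norm_isometry_left[OF U] norm_singular_values)
  also have "norm (\<chi> i. cos (g $ i))^2 = (\<Sum>i\<in>UNIV. (cos (g $ i))^2)"
    by (simp add: norm_vec_squared)
  also have "real CARD('r) - (\<Sum>i\<in>UNIV. (cos (g $ i))^2) = (\<Sum>i\<in>UNIV. (sin (g $ i))^2)"
    by (simp add: sin_squared_eq sum_subtractf)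
  also have "\<dots> = norm (\<chi> i. sin (g $ i))^2"
    by (simp add: norm_vec_squared)
  finally show ?thesis by (rule power2_eq_imp_eq) auto
qed

theorem corollaryC4:
  fixes U V :: "real^'r^'n" and g :: "real^'r" and Z :: "real^'r^'r"
  assumes "transpose U ** U = mat 1"
    and "transpose V ** V = mat 1"
    and "principal_angles U V g"
    and "psd Z"
  shows "infdist (V ** Z ** transpose V) {U ** W ** transpose U | W. psd W}
           \<le> sqrt 2 * norm Z * norm (\<chi> i. sin (g $ i))"
proof -
  define P where "P = U ** transpose U"
  define X where "X = V ** Z ** transpose V"
  have X: "psd X"
    using psd_congruence[OF assms(4), of "transpose V"] by (simp add: X_def)
  have "P ** X ** P = U ** (transpose U ** X ** U) ** transpose U"
    by (simp add: P_def matrix_mul_assoc)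
  moreover have "psd (transpose U ** X ** U)"
    using X by (rule psd_congruence)
  ultimately have "infdist X {U ** W ** transpose U | W. psd W} \<le> norm (X - P ** X ** P)"
    by (metis (mono_tags, lifting) dist_norm infdist_le mem_Collect_eq)
  also have "\<dots> \<le> sqrt 2 * norm ((mat 1 - P) ** X)"
    using X unfolding P_def psd_def
    by (intro pinching_bound orthogonal_projector_range assms(1)) simp
  also have "norm ((mat 1 - P) ** X) = norm ((mat 1 - P) ** V ** Z)"
    by (simp only: X_def matrix_mul_assoc norm_isometry_right[OF assms(2)])
  also have "\<dots> \<le> norm (\<chi> i. sin (g $ i)) * norm Z"
    using norm_matrix_mult_le[of "(mat 1 - P) ** V" Z]
    by (simp add: P_def principal_angles_residual[OF assms(1-3)])
  finally show ?thesis by (simp add: X_def mult_ac)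
qed

end
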